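(* Let $f:\mathbb R\to\mathbb C$ be such that $f$ and its derivative $f'$ are integrable, and for $y_o\in\mathbb R$ let $f_{y_o}(y)=f(y-y_o)$. Then for every $y_o\in\mathbb R$ and every $k>0$, \[ \left|\int_{\mathbb R} f_{y_o}(y)\Big(e^{ikx(y)}-e^{-ike^{-y}}\Big)dy\right|\le\Big(\frac{1}{\sqrt k}+\frac1k\Big)\big(\|f\|_{L^1}+\|f'\|_{L^1}\big),\] where $x(y)=-\log(1+e^{-y})$.
   Context: The left-hand side equals $\sqrt{2\pi}\,|\widetilde{\delta\check f}_{y_o}(-k)|$, where $\delta\check f=\check f-\check f^{Th}$ is the difference of the incoming functions obtained from $f_{y_o}$ via the CGHS map $x(y)=-\log(1+e^{-y})$ and the thermal map $x_{Th}(y)=-e^{-y}$ (namely $\check f(x)=f(y(x))/x'(y(x))$ for $x<0$), and Fourier transforms are $\tilde g(k)=(2\pi)^{-1/2}\int g(x)e^{-ikx}dx$. *)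

theory Defs
  imports "HOL-Analysis.Analysis"
begin

definition cghs_x :: "real \<Rightarrow> real" where
  "cghs_x y = - ln (1 + exp (- y))"

definition thermal_x :: "real \<Rightarrow> real" where
  "thermal_x y = - exp (- y)"

end

theory Submission
  imports Defs
begin

(* Write c = e^{ikx(y)} and t = e^{ikx_Th(y)}. Since x'(y) = 1/(1 + e^y) and x_Th'(y) = e^{-y},
   the combination Q = (1 + e^y) c - e^y t satisfies Q' = (ik + e^y)(c - t). Integrating
   f_{y_o} Q' by parts therefore expresses ik \<integral> f_{y_o} (c - t) through \<integral> f_{y_o}' Q and
   \<integral> f_{y_o} e^y (c - t); no boundary terms arise because an integrable function with integrable
   derivative vanishes at \<plusminus>\<infinity>. The weights are bounded: 0 \<le> x - x_Th \<le> e^{-2y}/2 and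
   |e^{iu} - 1| \<le> (2|u|)^{1/2} give |e^y (c - t)| \<le> \<surd>k, hence |Q| \<le> 1 + \<surd>k, and dividing by k
   yields the bound. *)

lemma set_integral_Icc_vector_derivative:
  fixes F F' :: "real \<Rightarrow> 'a::euclidean_space"
  assumes "a \<le> b"
    and "\<And>x. x \<in> {a..b} \<Longrightarrow> (F has_vector_derivative F' x) (at x within {a..b})"
    and "set_integrable lborel {a..b} F'"
  shows "(LINT x:{a..b}|lborel. F' x) = F b - F a"
proof -
  have "(F' has_integral F b - F a) {a..b}"
    using assms(1,2) by (intro fundamental_theorem_of_calculus) auto
  then show ?thesis
    using set_borel_integral_eq_integral(2)[OF assms(3)] by (simp add: integral_unique)
qed

lemma integrable_imp_set_integrable:
  fixes f :: "'a \<Rightarrow> 'b::{banach, second_countable_topology}"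
  assumes "integrable M f" and "A \<in> sets M"
  shows "set_integrable M A f"
  unfolding set_integrable_def using assms(2,1) by (rule integrable_mult_indicator)

lemma emeasure_lborel_atLeast: "emeasure lborel {a::real..} = \<infinity>"
proof (rule ccontr)
  assume "emeasure lborel {a..} \<noteq> \<infinity>"
  then have "emeasure lborel {a..} < top"
    by (simp add: top.not_eq_extremum)
  then obtain n :: nat where "emeasure lborel {a..} < of_nat n"
    by (blast dest: ennreal_Ex_less_of_nat)
  moreover have "emeasure lborel {a..a + real n} \<le> emeasure lborel {a..}"
    by (rule emeasure_mono) auto
  ultimately show False
    by (simp add: ennreal_of_nat_eq_real_of_nat)
qed

lemma integrable_tendsto_at_top_imp_zero:
  fixes F :: "real \<Rightarrow> 'a::{banach, second_countable_topology}"
  assumes int: "integrable lborel F" and lim: "(F \<longlongrightarrow> L) at_top"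
  shows "L = 0"
proof (rule ccontr)
  assume "L \<noteq> 0"
  then have "norm L / 2 < norm L" by simp
  from order_tendstoD(1)[OF tendsto_norm[OF lim] this]
  obtain M where M: "\<And>x. x \<ge> M \<Longrightarrow> norm L / 2 < norm (F x)"
    by (auto simp: eventually_at_top_linorder)
  have "integrable lborel (\<lambda>x. norm L / 2 * indicator {M..} x :: real)"
  proof (rule Bochner_Integration.integrable_bound[OF int])
    show "AE x in lborel. norm (norm L / 2 * indicator {M..} x :: real) \<le> norm (F x)"
      using M by (intro AE_I2) (auto simp: less_imp_le split: split_indicator)
  qed simp
  then have "integrable lborel (indicator {M..} :: real \<Rightarrow> real)"
    using \<open>L \<noteq> 0\<close> by (simp only: integrable_mult_left_iff) simp
  then show False
    by (simp add: integrable_indicator_iff emeasure_lborel_atLeast)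
qed

lemma integrable_tendsto_at_bot_imp_zero:
  fixes F :: "real \<Rightarrow> 'a::{banach, second_countable_topology}"
  assumes "integrable lborel F" and "(F \<longlongrightarrow> L) at_bot"
  shows "L = 0"
proof (rule integrable_tendsto_at_top_imp_zero)
  show "integrable lborel (\<lambda>x. F (- x))"
    using lborel_integrable_real_affine[OF assms(1), of "-1" 0] by simp
  show "((\<lambda>x. F (- x)) \<longlongrightarrow> L) at_top"
    using assms(2) by (simp add: filterlim_at_bot_mirror)
qed

lemma set_integral_atLeast_vector_derivative:
  fixes F F' :: "real \<Rightarrow> 'a::euclidean_space"
  assumes der: "\<And>x. (F has_vector_derivative F' x) (at x)"
    and F: "integrable lborel F" and F': "integrable lborel F'"
  shows "(LINT x:{a..}|lborel. F' x) = - F a"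
proof -
  have Icc: "(LINT x:{a..b}|lborel. F' x) = F b - F a" if "a \<le> b" for b
    using that by (intro set_integral_Icc_vector_derivative integrable_imp_set_integrable[OF F'])
      (simp_all add: has_vector_derivative_at_within[OF der])
  have "((\<lambda>b. LINT x:{a..b}|lborel. F' x) \<longlongrightarrow> (LINT x:{a..}|lborel. F' x)) at_top"
    by (intro tendsto_set_lebesgue_integral_at_top integrable_imp_set_integrable[OF F']) auto
  then have "((\<lambda>b. F a + (LINT x:{a..b}|lborel. F' x))
      \<longlongrightarrow> F a + (LINT x:{a..}|lborel. F' x)) at_top"
    by (intro tendsto_add tendsto_const)
  moreover have "eventually (\<lambda>b. F a + (LINT x:{a..b}|lborel. F' x) = F b) at_top"
    using eventually_ge_at_top[of a] by eventually_elim (simp add: Icc)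
  ultimately have "(F \<longlongrightarrow> F a + (LINT x:{a..}|lborel. F' x)) at_top"
    by (rule Lim_transform_eventually)
  then have "F a + (LINT x:{a..}|lborel. F' x) = 0"
    using integrable_tendsto_at_top_imp_zero[OF F] by blast
  then show ?thesis
    by (simp add: eq_neg_iff_add_eq_0 add.commute)
qed

lemma set_integral_atMost_vector_derivative:
  fixes F F' :: "real \<Rightarrow> 'a::euclidean_space"
  assumes der: "\<And>x. (F has_vector_derivative F' x) (at x)"
    and F: "integrable lborel F" and F': "integrable lborel F'"
  shows "(LINT x:{..b}|lborel. F' x) = F b"
proof -
  have Icc: "(LINT x:{a..b}|lborel. F' x) = F b - F a" if "a \<le> b" for a
    using that by (intro set_integral_Icc_vector_derivative integrable_imp_set_integrable[OF F'])
      (simp_all add: has_vector_derivative_at_within[OF der])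
  have "((\<lambda>a. LINT x:{a..b}|lborel. F' x) \<longlongrightarrow> (LINT x:{..b}|lborel. F' x)) at_bot"
    by (intro tendsto_set_lebesgue_integral_at_bot integrable_imp_set_integrable[OF F']) auto
  then have "((\<lambda>a. F b - (LINT x:{a..b}|lborel. F' x))
      \<longlongrightarrow> F b - (LINT x:{..b}|lborel. F' x)) at_bot"
    by (intro tendsto_diff tendsto_const)
  moreover have "eventually (\<lambda>a. F b - (LINT x:{a..b}|lborel. F' x) = F a) at_bot"
    using eventually_le_at_bot[of b] by eventually_elim (simp add: Icc)
  ultimately have "(F \<longlongrightarrow> F b - (LINT x:{..b}|lborel. F' x)) at_bot"
    by (rule Lim_transform_eventually)
  then have "F b - (LINT x:{..b}|lborel. F' x) = 0"
    using integrable_tendsto_at_bot_imp_zero[OF F] by blast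
  then show ?thesis
    by simp
qed

lemma integral_vector_derivative_eq_zero:
  fixes F F' :: "real \<Rightarrow> 'a::euclidean_space"
  assumes der: "\<And>x. (F has_vector_derivative F' x) (at x)"
    and F: "integrable lborel F" and F': "integrable lborel F'"
  shows "(LINT x|lborel. F' x) = 0"
proof -
  have "{..0::real} \<union> {0..} = UNIV"
    by auto
  then have "(LINT x|lborel. F' x) = (LINT x:{..0} \<union> {0..}|lborel. F' x)"
    by (simp add: set_lebesgue_integral_def)
  also have "\<dots> = (LINT x:{..0}|lborel. F' x) + (LINT x:{0..}|lborel. F' x)"
    using AE_lborel_singleton[of "0::real"]
    by (intro set_integral_Un_AE integrable_imp_set_integrable[OF F']) (auto elim: eventually_mono)
  also have "\<dots> = 0"
    using set_integral_atMost_vector_derivative[OF assms] set_integral_atLeast_vector_derivative[OF assms]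
    by simp
  finally show ?thesis .
qed

lemma integral_by_parts_lborel:
  fixes g g' Q Q' :: "real \<Rightarrow> 'a::{real_normed_algebra, euclidean_space}"
  assumes "\<And>x. (g has_vector_derivative g' x) (at x)"
    and "\<And>x. (Q has_vector_derivative Q' x) (at x)"
    and "integrable lborel (\<lambda>x. g x * Q x)"
    and "integrable lborel (\<lambda>x. g x * Q' x)"
    and "integrable lborel (\<lambda>x. g' x * Q x)"
  shows "(LINT x|lborel. g x * Q' x) = - (LINT x|lborel. g' x * Q x)"
proof -
  have "(LINT x|lborel. g x * Q' x + g' x * Q x) = 0"
    using assms by (intro integral_vector_derivative_eq_zero[where F="\<lambda>x. g x * Q x"]
        has_vector_derivative_mult) auto
  then show ?thesis
    using assms(4,5) by (simp add: eq_neg_iff_add_eq_0)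
qed

lemma integrable_mult_bounded:
  fixes h m :: "'a \<Rightarrow> 'b::{real_normed_algebra, banach, second_countable_topology}"
  assumes "integrable M h" and "m \<in> borel_measurable M" and "\<And>x. norm (m x) \<le> C"
  shows "integrable M (\<lambda>x. h x * m x)"
proof (rule Bochner_Integration.integrable_bound)
  show "integrable M (\<lambda>x. C * norm (h x))"
    using assms(1) by simp
  show "AE x in M. norm (h x * m x) \<le> norm (C * norm (h x))"
  proof (rule AE_I2)
    fix x
    have "norm (h x * m x) \<le> norm (h x) * C"
      using norm_mult_ineq mult_left_mono[OF assms(3)] norm_ge_zero order_trans by metis
    then show "norm (h x * m x) \<le> norm (C * norm (h x))"
      by (simp add: mult.commute)
  qed
qed (use assms(1,2) in measurable)

lemma norm_integral_mult_bounded_le: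
  fixes h m :: "'a \<Rightarrow> 'b::{real_normed_algebra, banach, second_countable_topology}"
  assumes "integrable M h" and "m \<in> borel_measurable M" and "\<And>x. norm (m x) \<le> C"
  shows "norm (LINT x|M. h x * m x) \<le> C * (LINT x|M. norm (h x))"
proof -
  have "norm (LINT x|M. h x * m x) \<le> (LINT x|M. norm (h x * m x))"
    by (rule integral_norm_bound)
  also have "\<dots> \<le> (LINT x|M. C * norm (h x))"
  proof (rule integral_mono)
    show "integrable M (\<lambda>x. norm (h x * m x))"
      using integrable_mult_bounded[OF assms] by simp
    show "norm (h x * m x) \<le> C * norm (h x)" for x
      using norm_mult_ineq mult_left_mono[OF assms(3)] norm_ge_zero order_trans mult.commute by metis
  qed (use assms(1) in simp)
  also have "\<dots> = C * (LINT x|M. norm (h x))"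
    by simp
  finally show ?thesis .
qed

lemma has_vector_derivative_cis:
  assumes "(\<theta> has_real_derivative d) (at y)"
  shows "((\<lambda>y. cis (\<theta> y)) has_vector_derivative \<i> * of_real d * cis (\<theta> y)) (at y)"
  using has_derivative_cis[OF assms[unfolded has_field_derivative_def]]
  by (simp add: has_vector_derivative_def scaleR_conv_of_real ac_simps)

lemma norm_cis_minus_one_le: "norm (cis u - 1) \<le> sqrt (2 * \<bar>u\<bar>)"
proof -
  have "norm (cis u - 1) = 2 * \<bar>sin (u / 2)\<bar>"
    using dist_exp_i_1[of u] by (simp add: cis_conv_exp)
  also have "\<dots> = sqrt (4 * (sin (u / 2))\<^sup>2)"
    by (simp add: real_sqrt_mult)
  also have "\<dots> \<le> sqrt (2 * \<bar>u\<bar>)"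
  proof (rule real_sqrt_le_mono)
    have "\<bar>sin (u / 2)\<bar> * \<bar>sin (u / 2)\<bar> \<le> \<bar>sin (u / 2)\<bar>"
      using abs_sin_le_one[of "u / 2"] by (intro mult_left_le_one_le) auto
    then have "(sin (u / 2))\<^sup>2 \<le> \<bar>sin (u / 2)\<bar>"
      by (simp add: power2_eq_square)
    also have "\<dots> \<le> \<bar>u / 2\<bar>"
      by (rule abs_sin_x_le_abs_x)
    finally show "4 * (sin (u / 2))\<^sup>2 \<le> 2 * \<bar>u\<bar>"
      by simp
  qed
  finally show ?thesis .
qed

lemma ln_one_plus_nonneg_lower_bound:
  fixes s :: real
  assumes "0 \<le> s"
  shows "s - s\<^sup>2 / 2 \<le> ln (1 + s)"
proof -
  let ?h = "\<lambda>x. ln (1 + x) - x + x\<^sup>2 / 2"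
  have "?h 0 \<le> ?h s"
  proof (rule DERIV_nonneg_imp_nondecreasing[OF assms])
    fix x :: real
    assume x: "0 \<le> x" "x \<le> s"
    have "(?h has_real_derivative (1 / (1 + x) - 1 + x)) (at x)"
      using x by (auto intro!: derivative_eq_intros)
    moreover have "1 / (1 + x) - 1 + x = x\<^sup>2 / (1 + x)"
      using x by (simp add: field_simps power2_eq_square)
    ultimately show "\<exists>d. (?h has_real_derivative d) (at x) \<and> 0 \<le> d"
      using x by auto
  qed
  then show ?thesis
    by simp
qed

lemma cghs_x_has_real_derivative: "(cghs_x has_real_derivative 1 / (1 + exp y)) (at y)"
proof -
  have "((\<lambda>y. - ln (1 + exp (- y))) has_real_derivative - (1 / (1 + exp (- y)) * (- exp (- y)))) (at y)"
    by (auto intro!: derivative_eq_intros simp: add_pos_pos)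
  moreover have "- (1 / (1 + exp (- y)) * (- exp (- y))) = 1 / (1 + exp y)"
    by (simp add: exp_minus field_simps add_pos_pos)
  ultimately show ?thesis
    by (simp add: cghs_x_def[abs_def])
qed

lemma thermal_x_has_real_derivative: "(thermal_x has_real_derivative exp (- y)) (at y)"
  unfolding thermal_x_def[abs_def] by (auto intro!: derivative_eq_intros)

lemma cghs_x_minus_thermal_x_bounds:
  "0 \<le> cghs_x y - thermal_x y" "cghs_x y - thermal_x y \<le> (exp (- y))\<^sup>2 / 2"
proof -
  have gap: "cghs_x y - thermal_x y = exp (- y) - ln (1 + exp (- y))"
    by (simp add: cghs_x_def thermal_x_def)
  show "0 \<le> cghs_x y - thermal_x y"
    unfolding gap using ln_add_one_self_le_self[of "exp (- y)"] by simp
  show "cghs_x y - thermal_x y \<le> (exp (- y))\<^sup>2 / 2"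
    unfolding gap using ln_one_plus_nonneg_lower_bound[of "exp (- y)"] by simp
qed

definition cghs_phase :: "real \<Rightarrow> real \<Rightarrow> complex" where
  "cghs_phase k y = cis (k * cghs_x y)"

definition thermal_phase :: "real \<Rightarrow> real \<Rightarrow> complex" where
  "thermal_phase k y = cis (k * thermal_x y)"

lemma cghs_phase_has_vector_derivative:
  "(cghs_phase k has_vector_derivative \<i> * of_real (k / (1 + exp y)) * cghs_phase k y) (at y)"
  using has_vector_derivative_cis[OF DERIV_cmult[OF cghs_x_has_real_derivative, of k]]
  by (simp add: cghs_phase_def[abs_def])

lemma thermal_phase_has_vector_derivative:
  "(thermal_phase k has_vector_derivative \<i> * of_real (k * exp (- y)) * thermal_phase k y) (at y)"
  using has_vector_derivative_cis[OF DERIV_cmult[OF thermal_x_has_real_derivative, of k]]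
  by (simp add: thermal_phase_def[abs_def])

lemma borel_measurable_cghs_phase [measurable]: "cghs_phase k \<in> borel_measurable borel"
  using cghs_phase_has_vector_derivative
  by (intro borel_measurable_continuous_onI continuous_on_vector_derivative)
    (auto intro: has_vector_derivative_at_within)

lemma borel_measurable_thermal_phase [measurable]: "thermal_phase k \<in> borel_measurable borel"
  using thermal_phase_has_vector_derivative
  by (intro borel_measurable_continuous_onI continuous_on_vector_derivative)
    (auto intro: has_vector_derivative_at_within)

(* The weights 1 + e^y and e^y are 1/x'(y) and 1/x_Th'(y): they turn the derivative of each
   phase into ik times the phase itself. *)
lemma has_vector_derivative_cghs_thermal_combination:
  "((\<lambda>y. of_real (1 + exp y) * cghs_phase k y - of_real (exp y) * thermal_phase k y)
    has_vector_derivative (\<i> * of_real k + of_real (exp y)) * (cghs_phase k y - thermal_phase k y)) (at y)"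
proof (rule has_vector_derivative_eq_rhs)
  show "((\<lambda>y. of_real (1 + exp y) * cghs_phase k y - of_real (exp y) * thermal_phase k y)
    has_vector_derivative
      (of_real (1 + exp y) * (\<i> * of_real (k / (1 + exp y)) * cghs_phase k y)
        + of_real (exp y) * cghs_phase k y)
      - (of_real (exp y) * (\<i> * of_real (k * exp (- y)) * thermal_phase k y)
        + of_real (exp y) * thermal_phase k y)) (at y)"
    by (intro has_vector_derivative_diff has_vector_derivative_mult cghs_phase_has_vector_derivative
        thermal_phase_has_vector_derivative) (auto intro!: derivative_eq_intros)
  have "1 + exp y \<noteq> 0"
    using exp_gt_zero[of y] by linarith
  then have "of_real (1 + exp y) * of_real (k / (1 + exp y)) = (of_real k :: complex)"
    by (metis of_real_mult nonzero_mult_div_cancel_left times_divide_eq_right)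
  then have cghs_weight:
      "of_real (1 + exp y) * (\<i> * of_real (k / (1 + exp y)) * z) = \<i> * of_real k * z" for z
    by (metis mult.assoc mult.left_commute)
  have "of_real (exp y) * of_real (k * exp (- y)) = (of_real k :: complex)"
    by (metis of_real_mult exp_minus_inverse mult.left_commute mult.right_neutral)
  then have thermal_weight:
      "of_real (exp y) * (\<i> * of_real (k * exp (- y)) * z) = \<i> * of_real k * z" for z
    by (metis mult.assoc mult.left_commute)
  show "(of_real (1 + exp y) * (\<i> * of_real (k / (1 + exp y)) * cghs_phase k y)
        + of_real (exp y) * cghs_phase k y)
      - (of_real (exp y) * (\<i> * of_real (k * exp (- y)) * thermal_phase k y)
        + of_real (exp y) * thermal_phase k y)
    = (\<i> * of_real k + of_real (exp y)) * (cghs_phase k y - thermal_phase k y)"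
    unfolding cghs_weight thermal_weight by (simp add: algebra_simps)
qed

lemma norm_exp_scaled_phase_difference_le:
  assumes "0 \<le> k"
  shows "norm (of_real (exp y) * (cghs_phase k y - thermal_phase k y)) \<le> sqrt k"
proof -
  define \<delta> where "\<delta> = cghs_x y - thermal_x y"
  have "cghs_phase k y - thermal_phase k y = (cis (k * \<delta>) - 1) * thermal_phase k y"
    by (simp add: cghs_phase_def thermal_phase_def \<delta>_def cis_mult algebra_simps)
  then have "norm (of_real (exp y) * (cghs_phase k y - thermal_phase k y))
      = exp y * norm (cis (k * \<delta>) - 1)"
    by (simp add: norm_mult thermal_phase_def)
  also have "\<dots> \<le> exp y * sqrt (2 * (k * \<delta>))"
    using norm_cis_minus_one_le[of "k * \<delta>"] cghs_x_minus_thermal_x_bounds(1)[of y] assms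
    by (simp add: \<delta>_def)
  also have "\<dots> \<le> exp y * sqrt (k * (exp (- y))\<^sup>2)"
  proof -
    have "k * \<delta> \<le> k * ((exp (- y))\<^sup>2 / 2)"
      unfolding \<delta>_def by (rule mult_left_mono[OF cghs_x_minus_thermal_x_bounds(2) assms])
    then show ?thesis
      by (intro mult_left_mono real_sqrt_le_mono) simp_all
  qed
  also have "\<dots> = sqrt k"
    by (simp add: real_sqrt_mult exp_minus)
  finally show ?thesis .
qed

lemma norm_cghs_phase_add_scaled_difference_le:
  assumes "0 \<le> k"
  shows "norm (cghs_phase k y + of_real (exp y) * (cghs_phase k y - thermal_phase k y)) \<le> 1 + sqrt k"
  using norm_triangle_ineq[of "cghs_phase k y" "of_real (exp y) * (cghs_phase k y - thermal_phase k y)"]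
    norm_exp_scaled_phase_difference_le[OF assms, of y]
  by (simp add: cghs_phase_def)

lemma integral_phase_difference_by_parts:
  fixes g g' :: "real \<Rightarrow> complex"
  assumes der: "\<And>y. (g has_vector_derivative g' y) (at y)"
    and g: "integrable lborel g" and g': "integrable lborel g'" and k: "0 \<le> k"
  defines "D \<equiv> \<lambda>y. cghs_phase k y - thermal_phase k y"
    and "E \<equiv> \<lambda>y. of_real (exp y) * (cghs_phase k y - thermal_phase k y)"
  shows "\<i> * of_real k * (LINT y|lborel. g y * D y)
    = - ((LINT y|lborel. g' y * (cghs_phase k y + E y)) + (LINT y|lborel. g y * E y))"
proof -
  have [measurable]: "D \<in> borel_measurable borel" "E \<in> borel_measurable borel"
    unfolding D_def E_def by measurable
  have norm_D: "norm (D y) \<le> 2" for y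
    using norm_triangle_ineq4[of "cghs_phase k y" "thermal_phase k y"]
    by (simp add: D_def cghs_phase_def thermal_phase_def)
  have norm_E: "norm (E y) \<le> sqrt k" for y
    unfolding E_def D_def by (rule norm_exp_scaled_phase_difference_le[OF k])
  have norm_Q: "norm (cghs_phase k y + E y) \<le> 1 + sqrt k" for y
    unfolding E_def by (rule norm_cghs_phase_add_scaled_difference_le[OF k])
  have norm_Q': "norm (\<i> * of_real k * D y + E y) \<le> 2 * k + sqrt k" for y
  proof -
    have "norm (\<i> * of_real k * D y) \<le> 2 * k"
      using mult_left_mono[OF norm_D k] by (simp add: norm_mult abs_of_nonneg[OF k] mult.commute)
    then show ?thesis
      using norm_triangle_ineq[of "\<i> * of_real k * D y" "E y"] norm_E[of y] by linarith
  qed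
  have dQ: "((\<lambda>y. cghs_phase k y + E y) has_vector_derivative \<i> * of_real k * D y + E y) (at y)"
    for y
    using has_vector_derivative_cghs_thermal_combination[of k y] by (simp add: D_def E_def algebra_simps)
  have int_gD: "integrable lborel (\<lambda>y. g y * D y)"
    by (rule integrable_mult_bounded[OF g _ norm_D]) measurable
  have int_gE: "integrable lborel (\<lambda>y. g y * E y)"
    by (rule integrable_mult_bounded[OF g _ norm_E]) measurable
  have "(LINT y|lborel. g y * (\<i> * of_real k * D y + E y))
      = - (LINT y|lborel. g' y * (cghs_phase k y + E y))"
    by (rule integral_by_parts_lborel[OF der dQ integrable_mult_bounded[OF g _ norm_Q]
        integrable_mult_bounded[OF g _ norm_Q'] integrable_mult_bounded[OF g' _ norm_Q]]) measurable
  moreover have "(LINT y|lborel. g y * (\<i> * of_real k * D y + E y))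
      = (LINT y|lborel. \<i> * of_real k * (g y * D y) + g y * E y)"
    by (simp add: distrib_left mult.left_commute)
  moreover have "\<dots> = \<i> * of_real k * (LINT y|lborel. g y * D y) + (LINT y|lborel. g y * E y)"
    using int_gD int_gE by (simp add: Bochner_Integration.integral_add)
  ultimately show ?thesis
    by (simp add: algebra_simps)
qed

lemma norm_integral_phase_difference_le:
  fixes g g' :: "real \<Rightarrow> complex"
  assumes der: "\<And>y. (g has_vector_derivative g' y) (at y)"
    and g: "integrable lborel g" and g': "integrable lborel g'" and k: "0 < k"
  shows "norm (LINT y|lborel. g y * (cghs_phase k y - thermal_phase k y))
    \<le> (1 / sqrt k + 1 / k) * ((LINT y|lborel. norm (g y)) + (LINT y|lborel. norm (g' y)))"
proof -
  define E where "E y = of_real (exp y) * (cghs_phase k y - thermal_phase k y)" for y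
  define A where "A = (LINT y|lborel. norm (g y))"
  define B where "B = (LINT y|lborel. norm (g' y))"
  define I where "I = (LINT y|lborel. g y * (cghs_phase k y - thermal_phase k y))"
  have [measurable]: "E \<in> borel_measurable borel"
    unfolding E_def[abs_def] by measurable
  have norm_E: "norm (E y) \<le> sqrt k" for y
    unfolding E_def by (rule norm_exp_scaled_phase_difference_le) (use k in simp)
  have norm_Q: "norm (cghs_phase k y + E y) \<le> 1 + sqrt k" for y
    unfolding E_def by (rule norm_cghs_phase_add_scaled_difference_le) (use k in simp)
  have "k * norm I = norm (\<i> * of_real k * I)"
    using k by (simp add: norm_mult)
  also have "\<dots>
      = norm ((LINT y|lborel. g' y * (cghs_phase k y + E y)) + (LINT y|lborel. g y * E y))"
    by (simp only: I_def E_def integral_phase_difference_by_parts[OF der g g' less_imp_le[OF k]]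
        norm_minus_cancel)
  also have "\<dots>
      \<le> norm (LINT y|lborel. g' y * (cghs_phase k y + E y)) + norm (LINT y|lborel. g y * E y)"
    by (rule norm_triangle_ineq)
  also have "\<dots> \<le> (1 + sqrt k) * B + sqrt k * A"
    unfolding A_def B_def
    by (intro add_mono norm_integral_mult_bounded_le g g' norm_Q norm_E) measurable
  also have "\<dots> \<le> sqrt k * (A + B) + (A + B)"
    using integral_nonneg_AE[of "\<lambda>y. norm (g y)" lborel] by (simp add: A_def algebra_simps)
  also have "\<dots> = k * ((1 / sqrt k + 1 / k) * (A + B))"
  proof -
    define r where "r = sqrt k"
    have "r > 0" "k = r * r"
      using k by (simp_all add: r_def)
    then show ?thesis
      unfolding r_def[symmetric] by (simp add: field_simps)
  qed
  finally show ?thesis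
    using k by (simp add: I_def A_def B_def)
qed

theorem lemma5:
  fixes f f' :: "real \<Rightarrow> complex" and y\<^sub>o k :: real
  assumes deriv: "\<And>y. (f has_vector_derivative f' y) (at y)"
    and int_f: "integrable lborel f"
    and int_f': "integrable lborel f'"
    and k_pos: "k > 0"
  shows "norm (LINT y|lborel. f (y - y\<^sub>o) *
            (exp (\<i> * complex_of_real (k * cghs_x y)) - exp (\<i> * complex_of_real (k * thermal_x y))))
         \<le> (1 / sqrt k + 1 / k) * ((LINT y|lborel. norm (f y)) + (LINT y|lborel. norm (f' y)))"
proof -
  have shifted_deriv: "((\<lambda>y. f (y - y\<^sub>o)) has_vector_derivative f' (y - y\<^sub>o)) (at y)" for y
  proof -
    have "((f \<circ> (\<lambda>y. y - y\<^sub>o)) has_vector_derivative 1 *\<^sub>R f' (y - y\<^sub>o)) (at y)"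
      by (intro vector_diff_chain_at deriv) (auto intro!: derivative_eq_intros)
    then show ?thesis
      by (simp add: o_def)
  qed
  have shifted_integrable: "integrable lborel (\<lambda>y. h (y - y\<^sub>o))"
    if "integrable lborel h" for h :: "real \<Rightarrow> complex"
    using lborel_integrable_real_affine[OF that, of 1 "- y\<^sub>o"] by simp
  have shifted_norm_integral: "(LINT y|lborel. norm (h (y - y\<^sub>o))) = (LINT y|lborel. norm (h y))"
    for h :: "real \<Rightarrow> complex"
    using lborel_integral_real_affine[of 1 "\<lambda>y. norm (h y)" "- y\<^sub>o"] by simp
  show ?thesis
    using norm_integral_phase_difference_le[OF shifted_deriv shifted_integrable[OF int_f]
        shifted_integrable[OF int_f'] k_pos]
    by (simp add: shifted_norm_integral cghs_phase_def[abs_def] thermal_phase_def[abs_def] cis_conv_exp)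
qed

end
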